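(* Let $V$ be a finite-dimensional $k$-vector space with $\dim V\ge2$. There exists a complete flag of $S^2V$ whose stabilizer in $\mathrm{SL}(V)$ (acting via its natural action on $S^2V$) is finite.
   Context: $k$ is an algebraically closed field of characteristic $0$; $S^2V$ is the second symmetric power of $V$. *)

theory Defs
  imports "HOL-Analysis.Analysis" "HOL-Computational_Algebra.Polynomial"
begin

definition alg_closed :: "'k::field itself \<Rightarrow> bool" where
  "alg_closed _ \<longleftrightarrow> (\<forall>p :: 'k poly. 0 < degree p \<longrightarrow> (\<exists>x. poly p x = 0))"

definition mscale :: "'a::field \<Rightarrow> 'a^'n^'n \<Rightarrow> 'a^'n^'n" where
  "mscale c A = (\<chi> i j. c * A $ i $ j)"

global_interpretation msp: vector_space "mscale :: 'a::field \<Rightarrow> 'a^'n^'n \<Rightarrow> 'a^'n^'n"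
  by unfold_locales (simp_all add: mscale_def vec_eq_iff algebra_simps)

text \<open>Model of S^2 V for V = k^n: symmetric n x n matrices
  (v w |-> (v w^T + w v^T)/2); g in GL(V) acts by A |-> g A g^T.\<close>
definition Sym2 :: "('a::field^'n^'n) set" where
  "Sym2 = {A. transpose A = A}"

definition sym2_act :: "'a::field^'n^'n \<Rightarrow> 'a^'n^'n \<Rightarrow> 'a^'n^'n" where
  "sym2_act g A = g ** A ** transpose g"

definition complete_flag :: "(nat \<Rightarrow> ('a::field^'n^'n) set) \<Rightarrow> bool" where
  "complete_flag F \<longleftrightarrow>
     (\<forall>i \<le> msp.dim (Sym2 :: ('a^'n^'n) set).
        msp.subspace (F i) \<and> F i \<subseteq> Sym2 \<and> msp.dim (F i) = i) \<and>
     (\<forall>i < msp.dim (Sym2 :: ('a^'n^'n) set). F i \<subseteq> F (Suc i)) \<and>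
     F (msp.dim (Sym2 :: ('a^'n^'n) set)) = Sym2"

definition flag_stabilizer_SL :: "(nat \<Rightarrow> ('a::field^'n^'n) set) \<Rightarrow> ('a^'n^'n) set" where
  "flag_stabilizer_SL F = {g. det g = 1 \<and>
     (\<forall>i \<le> msp.dim (Sym2 :: ('a^'n^'n) set). sym2_act g ` F i = F i)}"

end

theory Submission
  imports Defs
begin

text \<open>Take a flag whose first two members are spanned by the identity I and by I together with a
  diagonal matrix D = diag(d) with pairwise distinct entries, and complete it arbitrarily.
  Any g in SL(V) stabilising it satisfies g g^T = l I and g D g^T = a I + b D. Then
  g^T g = l I as well, so (g D g^T) g = l g D; comparing entries gives l d_j = a + b d_i whenever
  g_ij is non-zero, so every row of g has at most one non-zero entry, whose square is l. Since
  l^n = det (g g^T) = 1, all entries of g lie in the finite set of 0 and the 2n-th roots of unity.\<close>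

definition diag_mat :: "('n::finite \<Rightarrow> 'a::zero) \<Rightarrow> 'a^'n^'n" where
  "diag_mat d = (\<chi> i j. if i = j then d i else 0)"

definition matrix_unit :: "'n::finite \<Rightarrow> 'n \<Rightarrow> 'a::zero_neq_one^'n^'n" where
  "matrix_unit a b = (\<chi> i j. if i = a \<and> j = b then 1 else 0)"

lemma mat_eq_diag_mat: "mat c = diag_mat (\<lambda>_. c)"
  by (simp add: mat_def diag_mat_def vec_eq_iff)

lemma diag_mat_mult_nth: "(diag_mat d ** A) $ i $ j = d i * A $ i $ j"
  by (simp add: diag_mat_def matrix_matrix_mult_def if_distrib if_distribR cong: if_cong)

lemma mult_diag_mat_nth: "(A ** diag_mat d) $ i $ j = A $ i $ j * d j"
  by (simp add: diag_mat_def matrix_matrix_mult_def if_distrib if_distribR cong: if_cong)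

lemma diag_mat_mult_diag_mat: "diag_mat d ** diag_mat e = diag_mat (\<lambda>i. d i * e i)"
  by (simp add: vec_eq_iff diag_mat_mult_nth) (simp add: diag_mat_def)

lemma mat_mult_commute: "mat c ** A = A ** (mat c :: 'a::comm_semiring_1^'n^'n)"
  by (simp add: mat_eq_diag_mat vec_eq_iff diag_mat_mult_nth mult_diag_mat_nth mult.commute)

lemma mat_mult_mat: "mat a ** mat b = mat (a * b)"
  by (simp add: mat_eq_diag_mat vec_eq_iff diag_mat_mult_nth) (simp add: diag_mat_def)

lemma mscale_eq_mat_mult: "mscale c A = mat c ** A"
  by (simp add: mat_eq_diag_mat vec_eq_iff diag_mat_mult_nth mscale_def)

lemma matrix_add_rdistrib: "(B + C) ** A = B ** A + C ** A"
  by (vector matrix_matrix_mult_def sum.distrib[symmetric] field_simps)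

lemma det_mat: "det (mat c :: 'a::comm_ring_1^'n^'n) = c ^ CARD('n)"
  by (subst det_diagonal) (auto simp: mat_def)

lemma matrix_mult_transpose_self_nth: "(A ** transpose A) $ i $ i = (\<Sum>k\<in>UNIV. (A $ i $ k)\<^sup>2)"
  by (simp add: matrix_matrix_mult_def transpose_def power2_eq_square)

lemma scalar_gram_det:
  fixes g :: "'a::comm_ring_1^'n^'n"
  assumes "g ** transpose g = mat l"
  shows "l ^ CARD('n) = (det g)\<^sup>2"
proof -
  have "l ^ CARD('n) = det (g ** transpose g)"
    by (simp only: assms det_mat)
  also have "\<dots> = (det g)\<^sup>2"
    by (simp add: det_mul det_transpose power2_eq_square)
  finally show ?thesis .
qed

lemma transpose_mult_scalar_gram:
  fixes g :: "'a::field^'n^'n"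
  assumes "g ** transpose g = mat l" and "l \<noteq> 0"
  shows "transpose g ** g = mat l"
proof -
  have "g ** (mat (1 / l) ** transpose g) = mat (1 / l) ** (g ** transpose g)"
    by (simp only: matrix_mul_assoc mat_mult_commute[of "1 / l" g])
  also have "\<dots> = mat 1"
    using assms by (simp add: mat_mult_mat)
  finally have "g ** (mat (1 / l) ** transpose g) = mat 1" .
  then have "(mat (1 / l) ** transpose g) ** g = mat 1"
    by (rule matrix_left_right_inverse[THEN iffD1])
  then have "mat l ** ((mat (1 / l) ** transpose g) ** g) = mat l"
    by simp
  with assms(2) show ?thesis
    by (simp add: matrix_mul_assoc mat_mult_mat)
qed

lemma scalar_gram_row_support:
  fixes g :: "'a::field^'n^'n"
  assumes "inj d" and "l \<noteq> 0" and gram: "transpose g ** g = mat l"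
    and conj: "g ** diag_mat d ** transpose g = mat a + mat b ** diag_mat d"
    and "g $ i $ j \<noteq> 0" and "g $ i $ k \<noteq> 0"
  shows "j = k"
proof -
  have "(g ** diag_mat d ** transpose g) ** g = (g ** diag_mat d) ** mat l"
    by (simp only: gram flip: matrix_mul_assoc)
  then have "(mat a + mat b ** diag_mat d) ** g = (g ** diag_mat d) ** mat l"
    by (simp add: conj)
  then have "((mat a + mat b ** diag_mat d) ** g) $ i $ m = ((g ** diag_mat d) ** mat l) $ i $ m" for m
    by simp
  then have entry: "(a + b * d i) * g $ i $ m = l * d m * g $ i $ m" for m
    by (simp add: matrix_add_rdistrib mat_eq_diag_mat diag_mat_mult_diag_mat diag_mat_mult_nth
        mult_diag_mat_nth algebra_simps)
  have "l * d j = l * d k"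
    using entry[of j] entry[of k] assms(5,6) by simp
  then show ?thesis
    using assms(1,2) by (simp add: inj_eq)
qed

lemma scalar_gram_row_square:
  fixes g :: "'a::field^'n^'n"
  assumes "g ** transpose g = mat l" and "\<And>k. g $ i $ k \<noteq> 0 \<Longrightarrow> k = j"
  shows "(g $ i $ j)\<^sup>2 = l"
proof -
  have "l = (\<Sum>k\<in>UNIV. (g $ i $ k)\<^sup>2)"
    using matrix_mult_transpose_self_nth[of g i] by (simp add: assms(1) mat_def)
  also have "\<dots> = (\<Sum>k\<in>UNIV. if k = j then (g $ i $ j)\<^sup>2 else 0)"
    by (rule sum.cong) (auto dest: assms(2))
  finally show ?thesis
    by simp
qed

lemma SL_scalar_gram_entries_roots_of_unity:
  fixes g :: "'a::field^'n^'n"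
  assumes "det g = 1" and "inj d" and gram: "g ** transpose g = mat l"
    and conj: "g ** diag_mat d ** transpose g = mat a + mat b ** diag_mat d"
  shows "g $ i $ j = 0 \<or> (g $ i $ j) ^ (2 * CARD('n)) = 1"
proof (cases "g $ i $ j = 0")
  case False
  have ln: "l ^ CARD('n) = 1"
    using scalar_gram_det[OF gram] assms(1) by simp
  then have "l \<noteq> 0"
    by (metis zero_neq_one zero_power zero_less_card_finite)
  with gram have "transpose g ** g = mat l"
    by (rule transpose_mult_scalar_gram)
  then have "k = j" if "g $ i $ k \<noteq> 0" for k
    using scalar_gram_row_support[OF assms(2) \<open>l \<noteq> 0\<close> _ conj that False] by blast
  then have "(g $ i $ j)\<^sup>2 = l"
    by (rule scalar_gram_row_square[OF gram])
  with ln show ?thesis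
    by (simp add: power_mult)
qed simp

lemma matrix_eq_sum_matrix_units:
  "A = (\<Sum>(i, j)\<in>UNIV. mscale (A $ i $ j) (matrix_unit i j))"
proof -
  have "(\<Sum>(i, j)\<in>UNIV. mscale (A $ i $ j) (matrix_unit i j)) $ a $ b = A $ a $ b" for a b
  proof -
    have "(\<Sum>(i, j)\<in>UNIV. mscale (A $ i $ j) (matrix_unit i j)) $ a $ b
        = (\<Sum>p\<in>UNIV. if p = (a, b) then A $ a $ b else 0)"
      unfolding sum_component by (intro sum.cong) (auto simp: mscale_def matrix_unit_def split: if_splits)
    then show ?thesis
      by simp
  qed
  then show ?thesis
    by (simp add: vec_eq_iff)
qed

lemma span_matrix_units: "msp.span (range (case_prod matrix_unit)) = UNIV"
proof -
  have "A \<in> msp.span (range (case_prod matrix_unit))" for A :: "'a::field^'n^'n"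
    by (subst matrix_eq_sum_matrix_units, rule msp.span_sum)
      (auto intro!: msp.span_scale[OF msp.span_base])
  then show ?thesis
    by blast
qed

lemma msp_independent_imp_finite:
  fixes B :: "('a::field^'n^'n) set"
  assumes "msp.independent B"
  shows "finite B"
  using msp.independent_span_bound[OF _ assms, of "range (case_prod matrix_unit)"]
  by (simp add: span_matrix_units)

lemma subspace_Sym2: "msp.subspace (Sym2 :: ('a::field^'n^'n) set)"
  unfolding msp.subspace_def Sym2_def
  by (auto simp: vec_eq_iff transpose_def mscale_def)

lemma extend_to_basis_list_Sym2:
  fixes P :: "('a::field^'n^'n) list"
  assumes "distinct P" and "msp.independent (set P)" and "set P \<subseteq> Sym2"
  obtains bs where "distinct (P @ bs)" and "msp.independent (set (P @ bs))"
    and "msp.span (set (P @ bs)) = Sym2"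
proof -
  obtain B where B: "set P \<subseteq> B" "B \<subseteq> Sym2" "msp.independent B" "Sym2 \<subseteq> msp.span B"
    using msp.maximal_independent_subset_extend[OF assms(3,2)] by blast
  obtain bs where bs: "set bs = B - set P" "distinct bs"
    using finite_distinct_list[of "B - set P"] msp_independent_imp_finite[OF B(3)] by auto
  have "set (P @ bs) = B" "distinct (P @ bs)"
    using B(1) bs assms(1) by auto
  moreover have "msp.span B = Sym2"
    using B(4) msp.span_minimal[OF B(2) subspace_Sym2] by blast
  ultimately show ?thesis
    using that B(3) by metis
qed

lemma dim_Sym2_eq_length:
  fixes L :: "('a::field^'n^'n) list"
  assumes "distinct L" and "msp.independent (set L)" and "msp.span (set L) = Sym2"
  shows "msp.dim (Sym2 :: ('a^'n^'n) set) = length L"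
  using msp.dim_span_eq_card_independent[OF assms(2)] assms(1,3) by (simp add: distinct_card)

lemma complete_flag_span_take:
  fixes L :: "('a::field^'n^'n) list"
  assumes "distinct L" and "msp.independent (set L)" and "msp.span (set L) = Sym2"
  shows "complete_flag (\<lambda>i. msp.span (set (take i L)))"
  unfolding complete_flag_def dim_Sym2_eq_length[OF assms]
proof (intro conjI allI impI)
  fix i
  assume "i \<le> length L"
  show "msp.subspace (msp.span (set (take i L)))"
    by simp
  show "msp.span (set (take i L)) \<subseteq> Sym2"
    using assms(3) msp.span_mono[OF set_take_subset] by blast
  have "msp.independent (set (take i L))"
    using msp.independent_mono[OF assms(2) set_take_subset] .
  then show "msp.dim (msp.span (set (take i L))) = i"
    using \<open>i \<le> length L\<close> distinct_card[OF distinct_take[OF assms(1)]]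
    by (simp add: msp.dim_eq_card_independent)
next
  fix i
  show "msp.span (set (take i L)) \<subseteq> msp.span (set (take (Suc i) L))"
    by (intro msp.span_mono set_take_subset_set_take) simp
next
  show "msp.span (set (take (length L) L)) = Sym2"
    using assms(3) by simp
qed

lemma SL_stabilizer_scalar_gram:
  fixes F :: "nat \<Rightarrow> ('a::field^'n^'n) set"
  assumes g: "g \<in> flag_stabilizer_SL F" and dim: "2 \<le> msp.dim (Sym2 :: ('a^'n^'n) set)"
    and F1: "F 1 = msp.span {mat 1}" and F2: "F 2 = msp.span {mat 1, D}"
  obtains l a b where "g ** transpose g = mat l" and "g ** D ** transpose g = mat a + mat b ** D"
proof -
  have act: "sym2_act g ` F i = F i" if "i \<le> 2" for i
    using g dim that by (simp add: flag_stabilizer_SL_def)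
  have "sym2_act g (mat 1) \<in> msp.span {mat 1}"
    using act[of 1] F1 msp.span_base[of "mat 1" "{mat 1}"] by auto
  then obtain l where l: "g ** transpose g = mat l"
    by (auto simp: msp.span_singleton sym2_act_def mscale_eq_mat_mult)
  have "sym2_act g D \<in> msp.span {mat 1, D}"
    using act[of 2] F2 msp.span_base[of D "{mat 1, D}"] by auto
  then obtain a where "sym2_act g D - mscale a (mat 1) \<in> msp.span {D}"
    by (auto simp: msp.span_breakdown_eq)
  then obtain b where "sym2_act g D - mscale a (mat 1) = mscale b D"
    by (auto simp: msp.span_singleton)
  then have "g ** D ** transpose g = mat a + mat b ** D"
    by (simp add: sym2_act_def mscale_eq_mat_mult diff_eq_eq)
  with l that show thesis
    by blast
qed

lemma finite_roots_of_unity: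
  assumes "0 < m"
  shows "finite {x :: 'a::idom. x ^ m = 1}"
proof -
  have "coeff (monom (1 :: 'a) m - 1) m = 1"
    using assms by simp
  then have "monom (1 :: 'a) m - 1 \<noteq> 0"
    by (metis coeff_0 zero_neq_one)
  then have "finite {x. poly (monom (1 :: 'a) m - 1) x = 0}"
    by (rule poly_roots_finite)
  then show ?thesis
    by (simp add: poly_monom)
qed

lemma finite_vec_entries_in:
  assumes "finite S"
  shows "finite {v :: 'a^'n. \<forall>i. v $ i \<in> S}"
proof -
  have "{v :: 'a^'n. \<forall>i. v $ i \<in> S} = vec_lambda ` (UNIV \<rightarrow>\<^sub>E S)"
    by (auto simp: image_iff PiE_iff intro!: bexI[of _ "vec_nth _"])
  then show ?thesis
    using assms by (simp add: finite_PiE)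
qed

lemma finite_matrix_entries_in:
  assumes "finite S"
  shows "finite {g :: 'a^'n^'m. \<forall>i j. g $ i $ j \<in> S}"
  using finite_vec_entries_in[OF finite_vec_entries_in[OF assms]] by simp

lemma finite_SL_stabilizer_diag_flag:
  fixes F :: "nat \<Rightarrow> ('a::field^'n^'n) set"
  assumes "inj d" and "2 \<le> msp.dim (Sym2 :: ('a^'n^'n) set)"
    and "F 1 = msp.span {mat 1}" and "F 2 = msp.span {mat 1, diag_mat d}"
  shows "finite (flag_stabilizer_SL F)"
proof -
  let ?S = "insert 0 {x :: 'a. x ^ (2 * CARD('n)) = 1}"
  have "flag_stabilizer_SL F \<subseteq> {g. \<forall>i j. g $ i $ j \<in> ?S}"
  proof
    fix g
    assume g: "g \<in> flag_stabilizer_SL F"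
    then have "det g = 1"
      by (simp add: flag_stabilizer_SL_def)
    obtain l a b where "g ** transpose g = mat l"
      and "g ** diag_mat d ** transpose g = mat a + mat b ** diag_mat d"
      using SL_stabilizer_scalar_gram[OF g assms(2-4)] .
    then show "g \<in> {g. \<forall>i j. g $ i $ j \<in> ?S}"
      using SL_scalar_gram_entries_roots_of_unity[OF \<open>det g = 1\<close> assms(1)] by auto
  qed
  moreover have "finite {g :: 'a^'n^'n. \<forall>i j. g $ i $ j \<in> ?S}"
    by (intro finite_matrix_entries_in finite.insertI finite_roots_of_unity) simp
  ultimately show ?thesis
    by (rule finite_subset)
qed

lemma diag_mat_notin_span_mat_1:
  fixes d :: "'n::finite \<Rightarrow> 'a::field"
  assumes "inj d" and "2 \<le> CARD('n)"
  shows "diag_mat d \<notin> msp.span {mat 1}"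
proof
  obtain i j :: 'n where "i \<noteq> j"
    using assms(2) card_le_Suc0_iff_eq[of "UNIV :: 'n set"] by fastforce
  assume "diag_mat d \<in> msp.span {mat 1}"
  then obtain c where "diag_mat d = mat c"
    by (auto simp: msp.span_singleton mscale_eq_mat_mult)
  then have "d i = d j"
    by (simp add: mat_eq_diag_mat vec_eq_iff diag_mat_def) (metis)
  with assms(1) \<open>i \<noteq> j\<close> show False
    by (simp add: inj_eq)
qed

lemma mat_1_diag_mat_independent:
  fixes d :: "'n::finite \<Rightarrow> 'a::field"
  assumes "inj d" and "2 \<le> CARD('n)"
  shows "distinct [mat 1, diag_mat d]" and "msp.independent (set [mat 1, diag_mat d])"
proof -
  have notin: "diag_mat d \<notin> msp.span {mat 1}"
    using assms by (rule diag_mat_notin_span_mat_1)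
  then show "distinct [mat 1, diag_mat d]"
    by (metis distinct_length_2_or_more distinct_singleton insertI1 msp.span_base)
  have "mat 1 \<noteq> (0 :: 'a^'n^'n)"
    by (simp add: vec_eq_iff mat_def)
  then have "msp.independent (insert (diag_mat d) {mat 1})"
    by (intro msp.independent_insertI[OF notin]) (simp add: msp.dependent_single)
  then show "msp.independent (set [mat 1, diag_mat d])"
    by (simp add: insert_commute)
qed

lemma diag_mat_in_Sym2: "diag_mat d \<in> Sym2"
  by (simp add: Sym2_def diag_mat_def transpose_def vec_eq_iff)

theorem lemma7p2:
  assumes "alg_closed TYPE('k::field_char_0)"
    and "CARD('n::finite) \<ge> 2"
  shows "\<exists>F :: nat \<Rightarrow> ('k^'n^'n) set. complete_flag F \<and> finite (flag_stabilizer_SL F)"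
proof -
  define d :: "'n \<Rightarrow> 'k" where "d = of_nat \<circ> to_nat"
  have "inj d"
    unfolding d_def by (intro inj_compose inj_of_nat inj_to_nat)
  let ?P = "[mat 1, diag_mat d] :: ('k^'n^'n) list"
  have "set ?P \<subseteq> Sym2"
    by (simp add: diag_mat_in_Sym2 mat_eq_diag_mat)
  with mat_1_diag_mat_independent[OF \<open>inj d\<close> assms(2)]
  obtain bs where basis: "distinct (?P @ bs)" "msp.independent (set (?P @ bs))"
    "msp.span (set (?P @ bs)) = Sym2"
    by (rule extend_to_basis_list_Sym2)
  define F where "F i = msp.span (set (take i (?P @ bs)))" for i
  have "complete_flag F"
    unfolding F_def using basis by (rule complete_flag_span_take)
  moreover have "finite (flag_stabilizer_SL F)"
    using \<open>inj d\<close> dim_Sym2_eq_length[OF basis]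
    by (intro finite_SL_stabilizer_diag_flag) (simp_all add: F_def numeral_2_eq_2)
  ultimately show ?thesis
    by blast
qed

end
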